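(* Let $T$ be an $n\times n$ complex matrix with distinct eigenvalues $\lambda_1,\dots,\lambda_n$. Let $u_1,\dots,u_n$ be unit eigenvectors of $T$ with $Tu_i=\lambda_iu_i$, and let $v_1,\dots,v_n$ be unit eigenvectors of $T^*$ with $T^*v_i=\overline{\lambda_i}v_i$. If $T$ is unitarily equivalent to a complex symmetric matrix, then $|\langle u_i,u_j\rangle|=|\langle v_i,v_j\rangle|$ for all $1\le i<j\le n$.
   Context: A complex symmetric matrix is a square complex matrix $S$ with $S=S^t$ (transpose). Two matrices $A,B\in M_n(\mathbb{C})$ are unitarily equivalent if $A=U^*BU$ for some unitary $U$. $\langle\cdot,\cdot\rangle$ is the standard inner product on $\mathbb{C}^n$. *)

theory Defs
  imports "HOL-Analysis.Analysis"
begin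

definition conj_transpose :: "complex ^ 'n ^ 'm \<Rightarrow> complex ^ 'm ^ 'n" where
  "conj_transpose A = (\<chi> i j. cnj (A $ j $ i))"

definition unitary_mat :: "complex ^ 'n ^ 'n \<Rightarrow> bool" where
  "unitary_mat U \<longleftrightarrow> conj_transpose U ** U = mat 1"

definition complex_symmetric :: "complex ^ 'n ^ 'n \<Rightarrow> bool" where
  "complex_symmetric S \<longleftrightarrow> transpose S = S"

definition unitarily_equivalent :: "complex ^ 'n ^ 'n \<Rightarrow> complex ^ 'n ^ 'n \<Rightarrow> bool" where
  "unitarily_equivalent A B \<longleftrightarrow> (\<exists>U. unitary_mat U \<and> A = conj_transpose U ** B ** U)"

definition cinner :: "complex ^ 'n \<Rightarrow> complex ^ 'n \<Rightarrow> complex" where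
  "cinner x y = (\<Sum>k\<in>UNIV. x $ k * cnj (y $ k))"

end

theory Submission
  imports Defs
begin

text \<open>If \<open>U T U\<^sup>* = S\<close> is complex symmetric, then \<open>C = U\<^sup>* J U\<close>, with \<open>J\<close> the entrywise
  complex conjugation, is a conjugation satisfying \<open>T\<^sup>* C = C T\<close>. Hence \<open>C\<close> maps the unit
  eigenvector \<open>u\<^sub>i\<close> of \<open>T\<close> to a unit eigenvector of \<open>T\<^sup>*\<close> for \<open>\<lambda>\<^sub>i\<^sup>*\<close>. As the eigenvalues are distinct,
  these eigenspaces are lines, so \<open>v\<^sub>i = c\<^sub>i C u\<^sub>i\<close> with \<open>|c\<^sub>i| = 1\<close>, and
  \<open>\<langle>v\<^sub>i, v\<^sub>j\<rangle> = c\<^sub>i c\<^sub>j\<^sup>* \<langle>C u\<^sub>i, C u\<^sub>j\<rangle> = c\<^sub>i c\<^sub>j\<^sup>* \<langle>u\<^sub>j, u\<^sub>i\<rangle>\<close>.\<close>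

lemma matrix_vector_mult_smult: "(A::'a::comm_ring_1^'n^'m) *v (c *s x) = c *s (A *v x)"
  by (simp add: vec_eq_iff matrix_vector_mult_def sum_distrib_left algebra_simps)

lemma matrix_vector_mult_sum:
  "finite I \<Longrightarrow> (A::'a::comm_ring_1^'n^'m) *v (\<Sum>i\<in>I. f i) = (\<Sum>i\<in>I. A *v f i)"
  by (induction I rule: finite_induct) (auto simp: matrix_vector_right_distrib)

lemma cinner_smult_left: "cinner (c *s a) b = c * cinner a b"
  by (simp add: cinner_def sum_distrib_left mult.assoc)

lemma cinner_smult_right: "cinner a (c *s b) = cnj c * cinner a b"
  by (simp add: cinner_def sum_distrib_left algebra_simps)

lemma cinner_commute: "cinner y x = cnj (cinner x y)"
  by (simp add: cinner_def mult.commute)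

lemma cinner_zero_left: "cinner 0 b = 0"
  by (simp add: cinner_def)

lemma cinner_matrix_vector_mult_left: "cinner (A *v a) b = cinner a (conj_transpose A *v b)"
proof -
  have "cinner (A *v a) b = (\<Sum>k\<in>UNIV. \<Sum>l\<in>UNIV. A$k$l * a$l * cnj (b$k))"
    by (simp add: cinner_def matrix_vector_mult_def sum_distrib_right)
  also have "\<dots> = (\<Sum>l\<in>UNIV. \<Sum>k\<in>UNIV. A$k$l * a$l * cnj (b$k))"
    by (rule sum.swap)
  also have "\<dots> = cinner a (conj_transpose A *v b)"
    by (simp add: cinner_def matrix_vector_mult_def conj_transpose_def sum_distrib_left algebra_simps)
  finally show ?thesis .
qed

lemma conj_transpose_conj_transpose [simp]: "conj_transpose (conj_transpose A) = A"
  by (simp add: conj_transpose_def vec_eq_iff)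

lemma conj_transpose_matrix_mult:
  "conj_transpose (A ** B) = conj_transpose B ** conj_transpose (A::complex^'n^'m)"
  by (simp add: conj_transpose_def vec_eq_iff matrix_matrix_mult_def mult.commute)

lemma unitary_mat_right_inverse: "unitary_mat U \<Longrightarrow> U ** conj_transpose U = mat 1"
  unfolding unitary_mat_def using matrix_left_right_inverse by blast

lemma cinner_conj_transpose_mult:
  assumes "A ** conj_transpose A = mat 1"
  shows "cinner (conj_transpose A *v a) (conj_transpose A *v b) = cinner a b"
  by (simp add: cinner_matrix_vector_mult_left matrix_vector_mul_assoc assms)

definition cnj_vec :: "complex^'n \<Rightarrow> complex^'n" where
  "cnj_vec x = (\<chi> k. cnj (x$k))"

definition cnj_mat :: "complex^'n^'m \<Rightarrow> complex^'n^'m" where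
  "cnj_mat M = (\<chi> i j. cnj (M$i$j))"

lemma cnj_mat_mult_cnj_vec: "cnj_mat M *v cnj_vec x = cnj_vec (M *v x)"
  by (simp add: cnj_mat_def cnj_vec_def vec_eq_iff matrix_vector_mult_def)

lemma cnj_vec_smult: "cnj_vec (c *s x) = cnj c *s cnj_vec x"
  by (simp add: cnj_vec_def vec_eq_iff)

lemma cinner_cnj_vec: "cinner (cnj_vec a) (cnj_vec b) = cnj (cinner a b)"
  by (simp add: cinner_def cnj_vec_def)

lemma conj_transpose_symmetric: "transpose S = S \<Longrightarrow> conj_transpose S = cnj_mat S"
  by (simp add: conj_transpose_def cnj_mat_def vec_eq_iff transpose_def)

definition conjugation :: "complex^'n^'n \<Rightarrow> complex^'n \<Rightarrow> complex^'n" where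
  "conjugation U x = conj_transpose U *v cnj_vec (U *v x)"

lemma conjugation_smult: "conjugation U (c *s x) = cnj c *s conjugation U x"
  by (simp add: conjugation_def matrix_vector_mult_smult cnj_vec_smult)

lemma cinner_conjugation:
  assumes "unitary_mat U"
  shows "cinner (conjugation U x) (conjugation U y) = cinner y x"
proof -
  have UUH: "U ** conj_transpose U = mat 1"
    using assms by (rule unitary_mat_right_inverse)
  have "cinner (conjugation U x) (conjugation U y) = cnj (cinner (U *v x) (U *v y))"
    unfolding conjugation_def cinner_conj_transpose_mult[OF UUH] by (rule cinner_cnj_vec)
  also have "cinner (U *v x) (U *v y) = cinner x y"
    using cinner_conj_transpose_mult[of "conj_transpose U" x y] assms
    by (simp add: unitary_mat_def)
  finally show ?thesis
    by (simp add: cinner_commute[of x y])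
qed

lemma conj_transpose_mult_conjugation:
  assumes U: "unitary_mat U" and S: "transpose S = S" and T: "T = conj_transpose U ** S ** U"
  shows "conj_transpose T *v conjugation U x = conjugation U (T *v x)"
proof -
  have UUH: "U ** conj_transpose U = mat 1"
    using U by (rule unitary_mat_right_inverse)
  have "conj_transpose T = conj_transpose U ** cnj_mat S ** U"
    by (simp add: T conj_transpose_matrix_mult conj_transpose_symmetric[OF S] matrix_mul_assoc)
  then have "conj_transpose T *v conjugation U x
      = conj_transpose U *v (cnj_mat S *v ((U ** conj_transpose U) *v cnj_vec (U *v x)))"
    by (simp add: conjugation_def matrix_vector_mul_assoc matrix_mul_assoc)
  also have "\<dots> = conj_transpose U *v cnj_vec ((U ** conj_transpose U) *v (S *v (U *v x)))"
    by (simp add: UUH cnj_mat_mult_cnj_vec)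
  also have "\<dots> = conjugation U (T *v x)"
    by (simp add: conjugation_def T matrix_vector_mul_assoc matrix_mul_assoc)
  finally show ?thesis .
qed

lemma eigenvectors_distinct_eigenvalues_independent:
  fixes A :: "'a::field^'n^'n" and w :: "'n \<Rightarrow> 'a^'n"
  assumes mu: "inj mu" and nz: "\<And>i. w i \<noteq> 0" and eig: "\<And>i. A *v w i = mu i *s w i"
  shows "finite I \<Longrightarrow> (\<Sum>i\<in>I. c i *s w i) = 0 \<Longrightarrow> \<forall>i\<in>I. c i = 0"
proof (induction I arbitrary: c rule: finite_induct)
  case empty
  then show ?case by simp
next
  case (insert a I)
  have s: "c a *s w a + (\<Sum>i\<in>I. c i *s w i) = 0"
    using insert by simp
  then have "A *v (c a *s w a + (\<Sum>i\<in>I. c i *s w i)) = 0"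
    by simp
  then have s2: "(c a * mu a) *s w a + (\<Sum>i\<in>I. (c i * mu i) *s w i) = 0"
    using insert(1)
    by (simp add: matrix_vector_right_distrib matrix_vector_mult_sum matrix_vector_mult_smult
        eig mult.commute)
  \<comment> \<open>subtracting \<open>mu a\<close> times the relation kills the \<open>w a\<close> term\<close>
  have "(\<Sum>i\<in>I. (c i * (mu i - mu a)) *s w i)
      = (c a * mu a) *s w a + (\<Sum>i\<in>I. (c i * mu i) *s w i)
        - mu a *s (c a *s w a + (\<Sum>i\<in>I. c i *s w i))"
    by (simp add: algebra_simps vector_ssub_ldistrib sum_subtractf vector_sadd_rdistrib
        vec.scale_sum_right vector_smult_assoc)
  also have "\<dots> = 0"
    using s s2 by simp
  finally have "\<forall>i\<in>I. c i * (mu i - mu a) = 0"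
    using insert.IH[of "\<lambda>i. c i * (mu i - mu a)"] by simp
  moreover have "\<forall>i\<in>I. mu i \<noteq> mu a"
    using insert(2) mu by (metis injD)
  ultimately have ci: "\<forall>i\<in>I. c i = 0"
    by simp
  then have "c a *s w a = 0"
    using s by simp
  then have "c a = 0"
    using nz by (metis vec_eq_iff vector_smult_component zero_index mult_eq_0_iff)
  with ci show ?case
    by simp
qed

lemma eigenvectors_distinct_eigenvalues_span:
  fixes A :: "'a::field^'n^'n" and w :: "'n \<Rightarrow> 'a^'n"
  assumes mu: "inj mu" and nz: "\<And>i. w i \<noteq> 0" and eig: "\<And>i. A *v w i = mu i *s w i"
  shows "\<exists>c. y = (\<Sum>i\<in>UNIV. c i *s w i)"
proof -
  have "inj w"
  proof (rule injI)
    fix i j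
    assume "w i = w j"
    then have "mu i *s w i = mu j *s w i"
      using eig by metis
    moreover obtain k where k: "w i $ k \<noteq> 0"
      using nz[of i] by (metis vec_eq_iff zero_index)
    ultimately have "mu i = mu j"
      by (metis vector_smult_component mult_cancel_right)
    then show "i = j"
      using mu by (metis injD)
  qed
  then have sum_range: "(\<Sum>v\<in>range w. g v) = (\<Sum>i\<in>UNIV. g (w i))" for g
    by (simp add: sum.reindex)
  have "vec.independent (range w)"
    unfolding vec.independent_explicit
  proof (intro conjI allI impI)
    show "finite (range w)"
      by simp
    fix c
    assume "(\<Sum>v\<in>range w. c v *s v) = 0"
    then have "(\<Sum>i\<in>UNIV. c (w i) *s w i) = 0"
      by (simp add: sum_range)
    then have "\<forall>i\<in>UNIV. c (w i) = 0"
      by (rule eigenvectors_distinct_eigenvalues_independent[OF mu nz eig finite_class.finite_UNIV])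
    then show "\<forall>v\<in>range w. c v = 0"
      by auto
  qed
  moreover have "vec.dim (UNIV::('a^'n) set) \<le> card (range w)"
    using \<open>inj w\<close> by (simp add: card_image vec.dim_UNIV card_cart_basis)
  ultimately have "UNIV \<subseteq> vec.span (range w)"
    by (intro vec.card_ge_dim_independent) auto
  then obtain c where "y = (\<Sum>v\<in>range w. c v *s v)"
    using vec.span_finite[of "range w"] by auto
  then show ?thesis
    by (auto simp: sum_range)
qed

lemma eigenvector_distinct_eigenvalues_unique:
  fixes A :: "'a::field^'n^'n" and w :: "'n \<Rightarrow> 'a^'n"
  assumes mu: "inj mu" and nz: "\<And>i. w i \<noteq> 0" and eig: "\<And>i. A *v w i = mu i *s w i"
    and y: "A *v y = mu k *s y"
  shows "\<exists>c. y = c *s w k"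
proof -
  obtain d where d: "y = (\<Sum>i\<in>UNIV. d i *s w i)"
    using eigenvectors_distinct_eigenvalues_span[OF mu nz eig] by blast
  have "(\<Sum>i\<in>UNIV. (d i * (mu i - mu k)) *s w i)
      = (\<Sum>i\<in>UNIV. (d i * mu i) *s w i - (mu k * d i) *s w i)"
    by (rule sum.cong) (simp_all add: right_diff_distrib vector_sub_rdistrib mult.commute)
  also have "\<dots> = A *v y - mu k *s y"
    by (simp add: d sum_subtractf matrix_vector_mult_sum matrix_vector_mult_smult eig
        vector_smult_assoc vec.scale_sum_right)
  also have "\<dots> = 0"
    by (simp add: y)
  finally have "\<forall>i\<in>UNIV. d i * (mu i - mu k) = 0"
    by (rule eigenvectors_distinct_eigenvalues_independent[OF mu nz eig finite_class.finite_UNIV])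
  then have "d i = 0" if "i \<noteq> k" for i
    using that mu by (auto dest: injD)
  then have "y = d k *s w k"
    unfolding d by (subst sum.remove[of _ k]) auto
  then show ?thesis ..
qed

theorem theorem1:
  fixes T :: "complex ^ 'n ^ 'n"
    and lam :: "'n \<Rightarrow> complex"
    and u v :: "'n \<Rightarrow> complex ^ 'n"
  assumes distinct_eigs: "inj lam"
    and u_unit: "\<And>i. cinner (u i) (u i) = 1"
    and u_eig: "\<And>i. T *v u i = lam i *s u i"
    and v_unit: "\<And>i. cinner (v i) (v i) = 1"
    and v_eig: "\<And>i. conj_transpose T *v v i = cnj (lam i) *s v i"
    and ue: "\<exists>S. complex_symmetric S \<and> unitarily_equivalent T S"
  shows "\<forall>i j. i \<noteq> j \<longrightarrow> cmod (cinner (u i) (u j)) = cmod (cinner (v i) (v j))"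
proof -
  obtain S U where U: "unitary_mat U" and S: "transpose S = S" and T: "T = conj_transpose U ** S ** U"
    using ue unfolding complex_symmetric_def unitarily_equivalent_def by blast
  define x where "x i = conjugation U (u i)" for i
  have x_inner: "cinner (x i) (x j) = cinner (u j) (u i)" for i j
    unfolding x_def using U by (rule cinner_conjugation)
  have x_eig: "conj_transpose T *v x i = cnj (lam i) *s x i" for i
    unfolding x_def by (simp add: conj_transpose_mult_conjugation[OF U S T] u_eig conjugation_smult)
  have x_nonzero: "x i \<noteq> 0" for i
  proof
    assume "x i = 0"
    then show False
      using x_inner[of i i] u_unit[of i] by (simp add: cinner_zero_left)
  qed
  have "inj (\<lambda>i. cnj (lam i))"
    using distinct_eigs by (simp add: inj_def)
  from eigenvector_distinct_eigenvalues_unique[OF this x_nonzero x_eig v_eig]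
  have "\<exists>c. v k = c *s x k" for k .
  then obtain c where c: "\<And>k. v k = c k *s x k"
    by metis
  have v_inner: "cinner (v i) (v j) = c i * cnj (c j) * cinner (u j) (u i)" for i j
    by (simp add: c cinner_smult_left cinner_smult_right x_inner)
  have "cmod (c k) = 1" for k
  proof -
    have "c k * cnj (c k) = 1"
      using v_inner[of k k] v_unit[of k] u_unit[of k] by simp
    then have "(cmod (c k))\<^sup>2 = 1"
      by (metis complex_mod_mult_cnj norm_one)
    then show ?thesis
      using norm_ge_zero[of "c k"] by (auto simp: power2_eq_1_iff)
  qed
  then have "cmod (cinner (v i) (v j)) = cmod (cinner (u j) (u i))" for i j
    by (simp add: v_inner norm_mult)
  then show ?thesis
    by (metis cinner_commute complex_mod_cnj)
qed

end
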